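(* Let $\mathcal{G}$ be a Garside groupoid and $x$ an object of $\mathcal{G}$. Let $C_1,C_2,C_3$ be pairwise intersecting cells in $\mathcal{G}_{x\to}$. Then there is a cell $C\subseteq\mathcal{G}_{x\to}$ containing $(C_1\cap C_2)\cup(C_2\cap C_3)\cup(C_3\cap C_1)$.
   Context: Arrows compose like paths. A Garside category is a small category $\mathcal{C}$ with an automorphism $\phi$ and a natural transformation $\Delta$ from the identity functor to $\phi$ (components $\Delta_y\colon y\to\phi(y)$) such that $\mathcal{C}$ is cancellative and homogeneous (admits an additive length function vanishing exactly on identities), every atom (non-identity morphism not a product of two non-identity ones) is simple ($f\colon y\to z$ is simple if $ff^*=\Delta_y$ for some $f^*\colon z\to\phi(y)$), and for each object the morphisms with that source (resp. target) form a lattice under $\preccurlyeq$ (resp. $\succcurlyeq$). The Garside groupoid $\mathcal{G}$ is the enveloping groupoid of $\mathcal{C}$; $\phi,\Delta$ extend to $\mathcal{G}$. For morphisms $f,g$ of $\mathcal{G}$, $f\preccurlyeq g$ means $g=fz$ with $z$ a morphism of $\mathcal{C}$. $\mathcal{G}_{x\to}$ is the set of morphisms of $\mathcal{G}$ with source $x$; it is a lattice under $\preccurlyeq$. A cell in $\mathcal{G}_{x\to}$ is an interval $[f,f\Delta_{t(f)}]=\{g: f\preccurlyeq g\preccurlyeq f\Delta_{t(f)}\}$, where $t(f)$ is the target of $f$. *)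

theory Defs
  imports Main
begin

text \<open>A groupoid is given by its object type 'o, its morphism type 'm, source and
target maps, a composition cmp f g (defined when tgt f = src g; written in
path order: first f then g) and identities.  A Garside groupoid is modelled as
a groupoid G together with a subcategory C (a set of morphisms of G) which is a
Garside category (with automorphism phi = (phio, phim) and natural
transformation Delta) and which generates G as a groupoid.\<close>

definition is_groupoid ::
  "('m \<Rightarrow> 'o) \<Rightarrow> ('m \<Rightarrow> 'o) \<Rightarrow> ('m \<Rightarrow> 'm \<Rightarrow> 'm) \<Rightarrow> ('o \<Rightarrow> 'm) \<Rightarrow> bool" where
  "is_groupoid src tgt cmp idt \<longleftrightarrow>
     (\<forall>x. src (idt x) = x \<and> tgt (idt x) = x) \<and>
     (\<forall>f g. tgt f = src g \<longrightarrow> src (cmp f g) = src f \<and> tgt (cmp f g) = tgt g) \<and>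
     (\<forall>f g h. tgt f = src g \<longrightarrow> tgt g = src h \<longrightarrow> cmp (cmp f g) h = cmp f (cmp g h)) \<and>
     (\<forall>f. cmp (idt (src f)) f = f \<and> cmp f (idt (tgt f)) = f) \<and>
     (\<forall>f. \<exists>g. src g = tgt f \<and> tgt g = src f \<and> cmp f g = idt (src f) \<and> cmp g f = idt (tgt f))"

inductive_set gen_groupoid ::
  "('m \<Rightarrow> 'o) \<Rightarrow> ('m \<Rightarrow> 'o) \<Rightarrow> ('m \<Rightarrow> 'm \<Rightarrow> 'm) \<Rightarrow> ('o \<Rightarrow> 'm) \<Rightarrow> 'm set \<Rightarrow> 'm set"
  for src tgt cmp idt C where
  gen_base: "c \<in> C \<Longrightarrow> c \<in> gen_groupoid src tgt cmp idt C"
| gen_inv: "c \<in> C \<Longrightarrow> src d = tgt c \<Longrightarrow> tgt d = src c \<Longrightarrow> cmp c d = idt (src c) \<Longrightarrow>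
            cmp d c = idt (tgt c) \<Longrightarrow> d \<in> gen_groupoid src tgt cmp idt C"
| gen_comp: "f \<in> gen_groupoid src tgt cmp idt C \<Longrightarrow> g \<in> gen_groupoid src tgt cmp idt C \<Longrightarrow>
            tgt f = src g \<Longrightarrow> cmp f g \<in> gen_groupoid src tgt cmp idt C"

definition ldiv :: "('m \<Rightarrow> 'o) \<Rightarrow> ('m \<Rightarrow> 'o) \<Rightarrow> ('m \<Rightarrow> 'm \<Rightarrow> 'm) \<Rightarrow> 'm set \<Rightarrow> 'm \<Rightarrow> 'm \<Rightarrow> bool" where
  "ldiv src tgt cmp C f g \<longleftrightarrow> (\<exists>z\<in>C. src z = tgt f \<and> g = cmp f z)"

definition rdiv :: "('m \<Rightarrow> 'o) \<Rightarrow> ('m \<Rightarrow> 'o) \<Rightarrow> ('m \<Rightarrow> 'm \<Rightarrow> 'm) \<Rightarrow> 'm set \<Rightarrow> 'm \<Rightarrow> 'm \<Rightarrow> bool" where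
  "rdiv src tgt cmp C f g \<longleftrightarrow> (\<exists>z\<in>C. tgt z = src g \<and> f = cmp z g)"

definition is_lattice_on :: "'a set \<Rightarrow> ('a \<Rightarrow> 'a \<Rightarrow> bool) \<Rightarrow> bool" where
  "is_lattice_on S le \<longleftrightarrow>
     (\<forall>a\<in>S. le a a) \<and>
     (\<forall>a\<in>S. \<forall>b\<in>S. \<forall>c\<in>S. le a b \<longrightarrow> le b c \<longrightarrow> le a c) \<and>
     (\<forall>a\<in>S. \<forall>b\<in>S. le a b \<longrightarrow> le b a \<longrightarrow> a = b) \<and>
     (\<forall>a\<in>S. \<forall>b\<in>S. \<exists>j\<in>S. le a j \<and> le b j \<and> (\<forall>u\<in>S. le a u \<longrightarrow> le b u \<longrightarrow> le j u)) \<and>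
     (\<forall>a\<in>S. \<forall>b\<in>S. \<exists>m\<in>S. le m a \<and> le m b \<and> (\<forall>u\<in>S. le u a \<longrightarrow> le u b \<longrightarrow> le u m))"

definition is_identity :: "('m \<Rightarrow> 'o) \<Rightarrow> ('o \<Rightarrow> 'm) \<Rightarrow> 'm \<Rightarrow> bool" where
  "is_identity src idt f \<longleftrightarrow> f = idt (src f)"

definition is_atom ::
  "('m \<Rightarrow> 'o) \<Rightarrow> ('m \<Rightarrow> 'o) \<Rightarrow> ('m \<Rightarrow> 'm \<Rightarrow> 'm) \<Rightarrow> ('o \<Rightarrow> 'm) \<Rightarrow> 'm set \<Rightarrow> 'm \<Rightarrow> bool" where
  "is_atom src tgt cmp idt C f \<longleftrightarrow> f \<in> C \<and> \<not> is_identity src idt f \<and>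
     \<not> (\<exists>g\<in>C. \<exists>h\<in>C. tgt g = src h \<and> f = cmp g h \<and>
          \<not> is_identity src idt g \<and> \<not> is_identity src idt h)"

definition is_simple ::
  "('m \<Rightarrow> 'o) \<Rightarrow> ('m \<Rightarrow> 'o) \<Rightarrow> ('m \<Rightarrow> 'm \<Rightarrow> 'm) \<Rightarrow> 'm set \<Rightarrow> ('o \<Rightarrow> 'o) \<Rightarrow> ('o \<Rightarrow> 'm) \<Rightarrow> 'm \<Rightarrow> bool" where
  "is_simple src tgt cmp C phio Delta f \<longleftrightarrow> f \<in> C \<and>
     (\<exists>fs\<in>C. src fs = tgt f \<and> tgt fs = phio (src f) \<and> cmp f fs = Delta (src f))"

text \<open>Cancellativity of C is automatic inside G.\<close>
definition garside_groupoid ::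
  "('m \<Rightarrow> 'o) \<Rightarrow> ('m \<Rightarrow> 'o) \<Rightarrow> ('m \<Rightarrow> 'm \<Rightarrow> 'm) \<Rightarrow> ('o \<Rightarrow> 'm) \<Rightarrow> 'm set \<Rightarrow>
   ('o \<Rightarrow> 'o) \<Rightarrow> ('m \<Rightarrow> 'm) \<Rightarrow> ('o \<Rightarrow> 'm) \<Rightarrow> bool" where
  "garside_groupoid src tgt cmp idt C phio phim Delta \<longleftrightarrow>
     is_groupoid src tgt cmp idt \<and>
     \<comment> \<open>C is a subcategory\<close>
     (\<forall>x. idt x \<in> C) \<and>
     (\<forall>f\<in>C. \<forall>g\<in>C. tgt f = src g \<longrightarrow> cmp f g \<in> C) \<and>
     \<comment> \<open>C generates G\<close>
     gen_groupoid src tgt cmp idt C = UNIV \<and>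
     \<comment> \<open>phi is an automorphism of C\<close>
     bij phio \<and>
     bij_betw phim C C \<and>
     (\<forall>f\<in>C. src (phim f) = phio (src f) \<and> tgt (phim f) = phio (tgt f)) \<and>
     (\<forall>x. phim (idt x) = idt (phio x)) \<and>
     (\<forall>f\<in>C. \<forall>g\<in>C. tgt f = src g \<longrightarrow> phim (cmp f g) = cmp (phim f) (phim g)) \<and>
     \<comment> \<open>Delta is a natural transformation from the identity functor to phi\<close>
     (\<forall>y. Delta y \<in> C \<and> src (Delta y) = y \<and> tgt (Delta y) = phio y) \<and>
     (\<forall>f\<in>C. cmp f (Delta (tgt f)) = cmp (Delta (src f)) (phim f)) \<and>
     \<comment> \<open>homogeneity\<close>
     (\<exists>len :: 'm \<Rightarrow> nat.
        (\<forall>f\<in>C. \<forall>g\<in>C. tgt f = src g \<longrightarrow> len (cmp f g) = len f + len g) \<and>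
        (\<forall>f\<in>C. len f = 0 \<longleftrightarrow> is_identity src idt f)) \<and>
     \<comment> \<open>every atom is simple\<close>
     (\<forall>f. is_atom src tgt cmp idt C f \<longrightarrow> is_simple src tgt cmp C phio Delta f) \<and>
     \<comment> \<open>lattice conditions\<close>
     (\<forall>y. is_lattice_on {f\<in>C. src f = y} (ldiv src tgt cmp C)) \<and>
     (\<forall>y. is_lattice_on {f\<in>C. tgt f = y} (rdiv src tgt cmp C))"

definition cell ::
  "('m \<Rightarrow> 'o) \<Rightarrow> ('m \<Rightarrow> 'o) \<Rightarrow> ('m \<Rightarrow> 'm \<Rightarrow> 'm) \<Rightarrow> 'm set \<Rightarrow> ('o \<Rightarrow> 'm) \<Rightarrow> 'o \<Rightarrow> 'm set \<Rightarrow> bool" where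
  "cell src tgt cmp C Delta x A \<longleftrightarrow>
     (\<exists>f. src f = x \<and>
        A = {g. src g = x \<and> ldiv src tgt cmp C f g \<and>
                ldiv src tgt cmp C g (cmp f (Delta (tgt f)))})"

end

theory Submission
  imports Defs
begin

text \<open>Pairwise intersecting cells [f1, f1\<Delta>], [f2, f2\<Delta>], [f3, f3\<Delta>] satisfy
f2 \<preccurlyeq> f1\<Delta> and f2 \<preccurlyeq> f3\<Delta>. Writing f2 = p\<Delta>, this makes p a common prefix
of f1, f2, f3, and left translation by p reduces the claim to cells [ai, ai\<Delta>] with
ai in the positive category C. There take the joins jik = ai \<or> ak and the meet u of
the jik\<Delta>, and write u = h\<Delta>. Every b in [ai, ai\<Delta>] \<inter> [ak, ak\<Delta>] lies above jik, hence
above h, and below each j\<Delta>, since every join involves ai or ak; so b lies in the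
cell [h, h\<Delta>].\<close>

locale garside =
  fixes src :: "'m \<Rightarrow> 'o" and tgt :: "'m \<Rightarrow> 'o" and cmp :: "'m \<Rightarrow> 'm \<Rightarrow> 'm" and idt :: "'o \<Rightarrow> 'm"
    and C :: "'m set" and phio :: "'o \<Rightarrow> 'o" and phim :: "'m \<Rightarrow> 'm" and Delta :: "'o \<Rightarrow> 'm"
  assumes garside_groupoid: "garside_groupoid src tgt cmp idt C phio phim Delta"
begin

abbreviation ldivides (infix "\<preccurlyeq>" 50) where "f \<preccurlyeq> g \<equiv> ldiv src tgt cmp C f g"

definition mulDelta :: "'m \<Rightarrow> 'm" where "mulDelta f = cmp f (Delta (tgt f))"

definition cell_of :: "'m \<Rightarrow> 'm set" where
  "cell_of f = {g. src g = src f \<and> f \<preccurlyeq> g \<and> g \<preccurlyeq> mulDelta f}"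

lemma groupoid: "is_groupoid src tgt cmp idt"
  using garside_groupoid unfolding garside_groupoid_def by blast

lemma src_idt [simp]: "src (idt y) = y"
  and tgt_idt [simp]: "tgt (idt y) = y"
  and src_cmp [simp]: "tgt f = src g \<Longrightarrow> src (cmp f g) = src f"
  and tgt_cmp [simp]: "tgt f = src g \<Longrightarrow> tgt (cmp f g) = tgt g"
  and cmp_assoc: "tgt f = src g \<Longrightarrow> tgt g = src h \<Longrightarrow> cmp (cmp f g) h = cmp f (cmp g h)"
  and cmp_idt_left [simp]: "cmp (idt (src f)) f = f"
  and cmp_idt_right [simp]: "cmp f (idt (tgt f)) = f"
  and inverse_exists: "\<exists>g. src g = tgt f \<and> tgt g = src f \<and> cmp f g = idt (src f) \<and> cmp g f = idt (tgt f)"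
  using groupoid unfolding is_groupoid_def by blast+

lemma cmp_left_cancel:
  assumes "tgt f = src g" "tgt f = src g'" "cmp f g = cmp f g'"
  shows "g = g'"
proof -
  obtain i where "src i = tgt f" "tgt i = src f" "cmp i f = idt (tgt f)"
    using inverse_exists by blast
  then have "cmp i (cmp f h) = h" if "tgt f = src h" for h
    using that cmp_assoc[of i f h] by simp
  then show ?thesis using assms by metis
qed

lemma cmp_right_cancel:
  assumes "tgt f = src g" "tgt f' = src g" "cmp f g = cmp f' g"
  shows "f = f'"
proof -
  obtain i where "src i = tgt g" "tgt i = src g" "cmp g i = idt (src g)"
    using inverse_exists by blast
  then have "cmp (cmp h g) i = h" if "tgt h = src g" for h
    using that cmp_assoc[of h g i] by (metis cmp_idt_right)
  then show ?thesis using assms by metis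
qed

lemma cmp_in_C: "f \<in> C \<Longrightarrow> g \<in> C \<Longrightarrow> tgt f = src g \<Longrightarrow> cmp f g \<in> C"
  and bij_phio: "bij phio"
  and bij_phim: "bij_betw phim C C"
  and src_phim: "f \<in> C \<Longrightarrow> src (phim f) = phio (src f)"
  and Delta_in_C: "Delta y \<in> C"
  and src_Delta [simp]: "src (Delta y) = y"
  and tgt_Delta [simp]: "tgt (Delta y) = phio y"
  and Delta_natural: "f \<in> C \<Longrightarrow> cmp f (Delta (tgt f)) = cmp (Delta (src f)) (phim f)"
  and lattice_ldiv: "is_lattice_on {f\<in>C. src f = y} (\<preccurlyeq>)"
  using garside_groupoid unfolding garside_groupoid_def by blast+

lemma phim_in_C: "f \<in> C \<Longrightarrow> phim f \<in> C"
  using bij_phim by (auto simp: bij_betw_def)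

lemma ldiv_trans: "f \<preccurlyeq> g \<Longrightarrow> g \<preccurlyeq> h \<Longrightarrow> f \<preccurlyeq> h"
  unfolding ldiv_def by (metis cmp_assoc cmp_in_C src_cmp tgt_cmp)

lemma ldiv_src: "f \<preccurlyeq> g \<Longrightarrow> src g = src f"
  unfolding ldiv_def by auto

lemma ldiv_in_C: "f \<in> C \<Longrightarrow> f \<preccurlyeq> g \<Longrightarrow> g \<in> C"
  unfolding ldiv_def using cmp_in_C by auto

lemma ldiv_cmp_left_iff:
  assumes "src f = tgt p" "src g = tgt p"
  shows "cmp p f \<preccurlyeq> cmp p g \<longleftrightarrow> f \<preccurlyeq> g"
proof
  assume "cmp p f \<preccurlyeq> cmp p g"
  then obtain z where z: "z \<in> C" "src z = tgt f" "cmp p g = cmp (cmp p f) z"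
    using assms unfolding ldiv_def by auto
  then have "cmp p g = cmp p (cmp f z)"
    using assms by (simp add: cmp_assoc)
  then have "g = cmp f z"
    using cmp_left_cancel assms z by simp
  then show "f \<preccurlyeq> g" using z unfolding ldiv_def by auto
next
  assume "f \<preccurlyeq> g"
  then show "cmp p f \<preccurlyeq> cmp p g"
    using assms unfolding ldiv_def by (auto simp: cmp_assoc)
qed

lemma ldiv_join_exists:
  assumes "a \<in> C" "b \<in> C" "src a = src b"
  obtains j where "j \<in> C" "a \<preccurlyeq> j" "b \<preccurlyeq> j" "\<And>w. a \<preccurlyeq> w \<Longrightarrow> b \<preccurlyeq> w \<Longrightarrow> j \<preccurlyeq> w"
proof -
  let ?S = "{f\<in>C. src f = src a}"
  have "a \<in> ?S" "b \<in> ?S"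
    using assms by auto
  moreover have "\<forall>a\<in>?S. \<forall>b\<in>?S. \<exists>j\<in>?S. a \<preccurlyeq> j \<and> b \<preccurlyeq> j \<and> (\<forall>w\<in>?S. a \<preccurlyeq> w \<longrightarrow> b \<preccurlyeq> w \<longrightarrow> j \<preccurlyeq> w)"
    using lattice_ldiv[of "src a"] unfolding is_lattice_on_def by (elim conjE)
  ultimately obtain j where j: "j \<in> ?S" "a \<preccurlyeq> j" "b \<preccurlyeq> j" "\<forall>w\<in>?S. a \<preccurlyeq> w \<longrightarrow> b \<preccurlyeq> w \<longrightarrow> j \<preccurlyeq> w"
    by blast
  have "w \<in> ?S" if "a \<preccurlyeq> w" for w
    using that assms(1) ldiv_in_C ldiv_src by auto
  then show ?thesis
    using that j by auto
qed

lemma ldiv_meet_exists: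
  assumes "a \<in> C" "b \<in> C" "src a = y" "src b = y"
  obtains m where "m \<in> C" "src m = y" "m \<preccurlyeq> a" "m \<preccurlyeq> b"
    "\<And>w. w \<in> C \<Longrightarrow> src w = y \<Longrightarrow> w \<preccurlyeq> a \<Longrightarrow> w \<preccurlyeq> b \<Longrightarrow> w \<preccurlyeq> m"
proof -
  let ?S = "{f\<in>C. src f = y}"
  have "a \<in> ?S" "b \<in> ?S"
    using assms by auto
  moreover have "\<forall>a\<in>?S. \<forall>b\<in>?S. \<exists>m\<in>?S. m \<preccurlyeq> a \<and> m \<preccurlyeq> b \<and> (\<forall>w\<in>?S. w \<preccurlyeq> a \<longrightarrow> w \<preccurlyeq> b \<longrightarrow> w \<preccurlyeq> m)"
    using lattice_ldiv[of y] unfolding is_lattice_on_def by (elim conjE)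
  ultimately obtain m where "m \<in> ?S" "m \<preccurlyeq> a" "m \<preccurlyeq> b" "\<forall>w\<in>?S. w \<preccurlyeq> a \<longrightarrow> w \<preccurlyeq> b \<longrightarrow> w \<preccurlyeq> m"
    by blast
  then show ?thesis
    using that by auto
qed

lemma src_mulDelta [simp]: "src (mulDelta f) = src f"
  and tgt_mulDelta [simp]: "tgt (mulDelta f) = phio (tgt f)"
  by (simp_all add: mulDelta_def)

lemma mulDelta_in_C: "f \<in> C \<Longrightarrow> mulDelta f \<in> C"
  by (simp add: mulDelta_def cmp_in_C Delta_in_C)

lemma ldiv_mulDelta: "f \<preccurlyeq> mulDelta f"
  unfolding ldiv_def mulDelta_def using Delta_in_C by (intro bexI[of _ "Delta (tgt f)"]) simp_all

lemma mulDelta_cmp: "tgt p = src f \<Longrightarrow> mulDelta (cmp p f) = cmp p (mulDelta f)"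
  by (simp add: mulDelta_def cmp_assoc)

lemma mulDelta_cmp_positive:
  assumes "z \<in> C" "src z = tgt f"
  shows "mulDelta (cmp f z) = cmp (mulDelta f) (phim z)"
proof -
  have "mulDelta (cmp f z) = cmp f (cmp z (Delta (tgt z)))"
    using assms(2) by (simp add: mulDelta_def cmp_assoc)
  also have "\<dots> = cmp f (cmp (Delta (tgt f)) (phim z))"
    using Delta_natural[OF assms(1)] assms(2) by simp
  also have "\<dots> = cmp (mulDelta f) (phim z)"
    using src_phim[OF assms(1)] assms(2) by (simp add: mulDelta_def cmp_assoc)
  finally show ?thesis .
qed

lemma mulDelta_mono:
  assumes "f \<preccurlyeq> g"
  shows "mulDelta f \<preccurlyeq> mulDelta g"
proof -
  obtain z where z: "z \<in> C" "src z = tgt f" "g = cmp f z"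
    using assms unfolding ldiv_def by blast
  then have "mulDelta g = cmp (mulDelta f) (phim z)"
    using mulDelta_cmp_positive by simp
  then show ?thesis
    using z phim_in_C[OF z(1)] src_phim[OF z(1)] unfolding ldiv_def
    by (intro bexI[of _ "phim z"]) auto
qed

lemma mulDelta_ldiv_imp_ldiv:
  assumes "mulDelta f \<preccurlyeq> mulDelta g"
  shows "f \<preccurlyeq> g"
proof -
  obtain w where w: "w \<in> C" "src w = phio (tgt f)" "mulDelta g = cmp (mulDelta f) w"
    using assms unfolding ldiv_def by auto
  obtain z where z: "z \<in> C" "w = phim z"
    using w(1) bij_phim by (auto simp: bij_betw_def)
  have src_z: "src z = tgt f"
    using w(2) z src_phim bij_phio by (metis bij_pointE)
  have eq: "mulDelta g = mulDelta (cmp f z)"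
    using w(3) z src_z mulDelta_cmp_positive by simp
  have "phio (tgt g) = phio (tgt z)"
    using arg_cong[OF eq, of tgt] src_z by simp
  then have "tgt g = tgt z"
    using bij_phio by (metis bij_pointE)
  then have "g = cmp f z"
    using eq src_z cmp_right_cancel[of g "Delta (tgt g)" "cmp f z"] by (simp add: mulDelta_def)
  then show ?thesis
    using z src_z unfolding ldiv_def by auto
qed

lemma mulDelta_surj: "\<exists>f. src f = src g \<and> mulDelta f = g"
proof -
  obtain y where y: "phio y = tgt g"
    using bij_phio by (metis bij_pointE)
  obtain e where e: "src e = tgt (Delta y)" "tgt e = y" "cmp e (Delta y) = idt (phio y)"
    using inverse_exists[of "Delta y"] by auto
  have "mulDelta (cmp g e) = g"
    using e y by (simp add: mulDelta_def cmp_assoc)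
  then show ?thesis
    using e y by (intro exI[of _ "cmp g e"]) simp
qed

lemma cell_iff: "cell src tgt cmp C Delta x A \<longleftrightarrow> (\<exists>f. src f = x \<and> A = cell_of f)"
  unfolding cell_def cell_of_def mulDelta_def by auto

lemma cell_of_src: "g \<in> cell_of f \<Longrightarrow> src g = src f"
  unfolding cell_of_def by simp

lemma cell_of_subset_C: "f \<in> C \<Longrightarrow> cell_of f \<subseteq> C"
  unfolding cell_of_def using ldiv_in_C by blast

lemma cells_meet_imp_ldiv_mulDelta: "cell_of f \<inter> cell_of g \<noteq> {} \<Longrightarrow> f \<preccurlyeq> mulDelta g"
  unfolding cell_of_def using ldiv_trans by blast

lemma cell_of_cmp:
  assumes "src f = tgt p"
  shows "cell_of (cmp p f) = cmp p ` cell_of f"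
proof (intro equalityI subsetI)
  fix g assume "g \<in> cell_of (cmp p f)"
  then have g: "cmp p f \<preccurlyeq> g" "g \<preccurlyeq> cmp p (mulDelta f)"
    using assms mulDelta_cmp[of p f] unfolding cell_of_def by auto
  then obtain z where z: "z \<in> C" "src z = tgt f" "g = cmp p (cmp f z)"
    using assms unfolding ldiv_def by (auto simp: cmp_assoc)
  then have "cmp f z \<in> cell_of f"
    using g assms ldiv_cmp_left_iff unfolding cell_of_def by simp
  then show "g \<in> cmp p ` cell_of f"
    using z by blast
next
  fix g assume "g \<in> cmp p ` cell_of f"
  then obtain b where "b \<in> cell_of f" "g = cmp p b"
    by blast
  then show "g \<in> cell_of (cmp p f)"
    using assms ldiv_cmp_left_iff mulDelta_cmp[of p f] unfolding cell_of_def by auto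
qed

lemma positive_cells_covered:
  assumes "a1 \<in> C" "a2 \<in> C" "a3 \<in> C" "src a1 = y" "src a2 = y" "src a3 = y"
  obtains h where "src h = y"
    "(cell_of a1 \<inter> cell_of a2) \<union> (cell_of a2 \<inter> cell_of a3) \<union> (cell_of a3 \<inter> cell_of a1) \<subseteq> cell_of h"
proof -
  obtain j12 where j12: "j12 \<in> C" "a1 \<preccurlyeq> j12" "a2 \<preccurlyeq> j12" "\<And>w. a1 \<preccurlyeq> w \<Longrightarrow> a2 \<preccurlyeq> w \<Longrightarrow> j12 \<preccurlyeq> w"
    using ldiv_join_exists[of a1 a2] assms by auto
  obtain j23 where j23: "j23 \<in> C" "a2 \<preccurlyeq> j23" "a3 \<preccurlyeq> j23" "\<And>w. a2 \<preccurlyeq> w \<Longrightarrow> a3 \<preccurlyeq> w \<Longrightarrow> j23 \<preccurlyeq> w"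
    using ldiv_join_exists[of a2 a3] assms by auto
  obtain j31 where j31: "j31 \<in> C" "a3 \<preccurlyeq> j31" "a1 \<preccurlyeq> j31" "\<And>w. a3 \<preccurlyeq> w \<Longrightarrow> a1 \<preccurlyeq> w \<Longrightarrow> j31 \<preccurlyeq> w"
    using ldiv_join_exists[of a3 a1] assms by auto
  have src_joins: "src j12 = y" "src j23 = y" "src j31 = y"
    using j12(2) j23(2) j31(2) assms ldiv_src by auto
  have Delta_joins: "mulDelta j12 \<in> C" "mulDelta j23 \<in> C" "mulDelta j31 \<in> C"
    "src (mulDelta j12) = y" "src (mulDelta j23) = y" "src (mulDelta j31) = y"
    using j12(1) j23(1) j31(1) src_joins mulDelta_in_C by simp_all
  obtain m where m: "m \<in> C" "src m = y" "m \<preccurlyeq> mulDelta j12" "m \<preccurlyeq> mulDelta j23"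
    "\<And>w. w \<in> C \<Longrightarrow> src w = y \<Longrightarrow> w \<preccurlyeq> mulDelta j12 \<Longrightarrow> w \<preccurlyeq> mulDelta j23 \<Longrightarrow> w \<preccurlyeq> m"
    using ldiv_meet_exists[OF Delta_joins(1,2,4,5)] by blast
  obtain u where u: "u \<in> C" "src u = y" "u \<preccurlyeq> m" "u \<preccurlyeq> mulDelta j31"
    "\<And>w. w \<in> C \<Longrightarrow> src w = y \<Longrightarrow> w \<preccurlyeq> m \<Longrightarrow> w \<preccurlyeq> mulDelta j31 \<Longrightarrow> w \<preccurlyeq> u"
    using ldiv_meet_exists[OF m(1) Delta_joins(3) m(2) Delta_joins(6)] by blast
  obtain h where h: "src h = y" "mulDelta h = u"
    using mulDelta_surj u(2) by blast
  have "u \<preccurlyeq> mulDelta j12" "u \<preccurlyeq> mulDelta j23"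
    using u(3) m(3,4) ldiv_trans by blast+
  then have h_below_joins: "h \<preccurlyeq> j12" "h \<preccurlyeq> j23" "h \<preccurlyeq> j31"
    using u(4) h(2) mulDelta_ldiv_imp_ldiv by simp_all
  have in_cell_h: "b \<in> cell_of h"
    if "b \<in> C" "src b = y" "h \<preccurlyeq> b"
      "b \<preccurlyeq> mulDelta j12" "b \<preccurlyeq> mulDelta j23" "b \<preccurlyeq> mulDelta j31" for b
  proof -
    have "b \<preccurlyeq> u"
      using u(5)[OF that(1,2) m(5)[OF that(1,2,4,5)] that(6)] .
    then show ?thesis
      using that(2,3) h unfolding cell_of_def by simp
  qed
  have pair_in_cell_h: "b \<in> cell_of h"
    if "b \<in> cell_of a" "b \<in> cell_of a'" "a \<in> {a1, a2, a3}" "a' \<in> {a1, a2, a3}"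
      "h \<preccurlyeq> j" "\<And>w. a \<preccurlyeq> w \<Longrightarrow> a' \<preccurlyeq> w \<Longrightarrow> j \<preccurlyeq> w"
      "\<forall>J\<in>{j12, j23, j31}. a \<preccurlyeq> J \<or> a' \<preccurlyeq> J" for a a' j b
  proof -
    have b: "b \<in> C" "src b = y" "a \<preccurlyeq> b" "a' \<preccurlyeq> b" "b \<preccurlyeq> mulDelta a" "b \<preccurlyeq> mulDelta a'"
      using that(1-4) assms cell_of_subset_C unfolding cell_of_def by auto
    have "b \<preccurlyeq> mulDelta J" if "J \<in> {j12, j23, j31}" for J
      using that \<open>\<forall>J\<in>{j12, j23, j31}. a \<preccurlyeq> J \<or> a' \<preccurlyeq> J\<close> b(5,6) mulDelta_mono ldiv_trans by blast
    moreover have "h \<preccurlyeq> b"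
      using that(5,6) b(3,4) ldiv_trans by blast
    ultimately show ?thesis
      using in_cell_h b(1,2) by simp
  qed
  have "(cell_of a1 \<inter> cell_of a2) \<union> (cell_of a2 \<inter> cell_of a3) \<union> (cell_of a3 \<inter> cell_of a1)
          \<subseteq> cell_of h"
  proof
    fix b assume "b \<in> (cell_of a1 \<inter> cell_of a2) \<union> (cell_of a2 \<inter> cell_of a3) \<union> (cell_of a3 \<inter> cell_of a1)"
    then consider "b \<in> cell_of a1" "b \<in> cell_of a2" | "b \<in> cell_of a2" "b \<in> cell_of a3"
      | "b \<in> cell_of a3" "b \<in> cell_of a1"
      by blast
    then show "b \<in> cell_of h"
    proof cases
      case 1
      then show ?thesis
        using pair_in_cell_h[OF 1 _ _ h_below_joins(1) j12(4)] j23(2) j31(3) j12(2) by simp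
    next
      case 2
      then show ?thesis
        using pair_in_cell_h[OF 2 _ _ h_below_joins(2) j23(4)] j12(3) j31(2) j23(2) by simp
    next
      case 3
      then show ?thesis
        using pair_in_cell_h[OF 3 _ _ h_below_joins(3) j31(4)] j12(2) j23(3) j31(2) by simp
    qed
  qed
  then show ?thesis
    using that h(1) by blast
qed

text \<open>Only two of the three intersections are needed: they already give a common
prefix of the three minimal elements.\<close>

lemma pairwise_meeting_cells_covered:
  assumes "src f1 = x" "src f2 = x" "src f3 = x"
    and "cell_of f1 \<inter> cell_of f2 \<noteq> {}" "cell_of f2 \<inter> cell_of f3 \<noteq> {}"
  obtains h where "src h = x"
    "(cell_of f1 \<inter> cell_of f2) \<union> (cell_of f2 \<inter> cell_of f3) \<union> (cell_of f3 \<inter> cell_of f1) \<subseteq> cell_of h"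
proof -
  obtain p where p: "src p = x" "mulDelta p = f2"
    using mulDelta_surj assms(2) by blast
  have "p \<preccurlyeq> f1" "p \<preccurlyeq> f2" "p \<preccurlyeq> f3"
    using assms(4,5) p(2) cells_meet_imp_ldiv_mulDelta[of f2] mulDelta_ldiv_imp_ldiv ldiv_mulDelta
    by (auto simp: Int_commute)
  then obtain a1 a2 a3 where a: "a1 \<in> C" "a2 \<in> C" "a3 \<in> C"
    "src a1 = tgt p" "src a2 = tgt p" "src a3 = tgt p"
    "f1 = cmp p a1" "f2 = cmp p a2" "f3 = cmp p a3"
    unfolding ldiv_def by metis
  obtain h where h: "src h = tgt p"
    "(cell_of a1 \<inter> cell_of a2) \<union> (cell_of a2 \<inter> cell_of a3) \<union> (cell_of a3 \<inter> cell_of a1) \<subseteq> cell_of h"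
    using positive_cells_covered[OF a(1-6)] .
  have inj: "inj_on (cmp p) {b. src b = tgt p}"
    using cmp_left_cancel by (intro inj_onI) simp
  have "\<And>a. src a = tgt p \<Longrightarrow> cell_of a \<subseteq> {b. src b = tgt p}"
    by (auto dest: cell_of_src)
  then have "(cell_of f1 \<inter> cell_of f2) \<union> (cell_of f2 \<inter> cell_of f3) \<union> (cell_of f3 \<inter> cell_of f1) =
      cmp p ` ((cell_of a1 \<inter> cell_of a2) \<union> (cell_of a2 \<inter> cell_of a3) \<union> (cell_of a3 \<inter> cell_of a1))"
    using a(4-9) cell_of_cmp inj_on_image_Int[OF inj] by (simp add: image_Un)
  also have "\<dots> \<subseteq> cell_of (cmp p h)"
    using h cell_of_cmp by (simp add: image_mono)
  finally show ?thesis
    using that[of "cmp p h"] h(1) p(1) by simp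
qed

end

theorem lemma4p8:
  fixes src tgt :: "'m \<Rightarrow> 'o" and cmp :: "'m \<Rightarrow> 'm \<Rightarrow> 'm" and idt :: "'o \<Rightarrow> 'm"
    and C :: "'m set" and phio :: "'o \<Rightarrow> 'o" and phim :: "'m \<Rightarrow> 'm" and Delta :: "'o \<Rightarrow> 'm"
    and x :: 'o and C1 C2 C3 :: "'m set"
  assumes "garside_groupoid src tgt cmp idt C phio phim Delta"
    and "cell src tgt cmp C Delta x C1"
    and "cell src tgt cmp C Delta x C2"
    and "cell src tgt cmp C Delta x C3"
    and "C1 \<inter> C2 \<noteq> {}" and "C2 \<inter> C3 \<noteq> {}" and "C3 \<inter> C1 \<noteq> {}"
  shows "\<exists>A. cell src tgt cmp C Delta x A \<and> (C1 \<inter> C2) \<union> (C2 \<inter> C3) \<union> (C3 \<inter> C1) \<subseteq> A"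
proof -
  interpret garside src tgt cmp idt C phio phim Delta
    by (rule garside.intro) fact
  obtain f1 f2 f3 where f: "src f1 = x" "src f2 = x" "src f3 = x"
    "C1 = cell_of f1" "C2 = cell_of f2" "C3 = cell_of f3"
    using assms(2-4) unfolding cell_iff by blast
  obtain h where "src h = x" "(C1 \<inter> C2) \<union> (C2 \<inter> C3) \<union> (C3 \<inter> C1) \<subseteq> cell_of h"
    using pairwise_meeting_cells_covered[OF f(1-3)] assms(5,6) f(4-6) by metis
  then show ?thesis
    using cell_iff by blast
qed

end
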